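(* Let $\alpha\in(0,1)$ and $\beta=\frac{1}{1+\ln\frac1\alpha}$. Let $G'_\alpha$ be the two-player zero-sum game in which the $x$-player (minimizer) and the $y$-player (maximizer) choose $x\in[0,1-\alpha]$ and $y\in[0,1-\alpha]$ respectively (mixed strategies being probability distributions on $[0,1-\alpha]$), with payoff $h(x,y)=\frac{(1-y)\mathbf{1}_{y\ge x}}{1-x}$. Then the value of $G'_\alpha$ is $\beta$. Moreover, an optimal strategy of the $x$-player is the distribution with an atom of weight $\beta$ at $x=0$ and density $f_X(x)=\frac{\beta}{1-x}$ on $[0,1-\alpha]$, and an optimal strategy of the $y$-player is the distribution with an atom of weight $\beta$ at $y=1-\alpha$ and density $f_Y(y)=\frac{\beta}{1-y}$ on $[0,1-\alpha]$. *)

theory Defs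
  imports "HOL-Probability.Probability"
begin

definition beta :: "real \<Rightarrow> real" where
  "beta \<alpha> = 1 / (1 + ln (1 / \<alpha>))"

definition payoff :: "real \<Rightarrow> real \<Rightarrow> real" where
  "payoff x y = (1 - y) * indicator {x..} y / (1 - x)"

definition strategies :: "real \<Rightarrow> real measure set" where
  "strategies \<alpha> = {M. prob_space M \<and> sets M = sets borel \<and> emeasure M {0..1-\<alpha>} = 1}"

definition exp_payoff :: "real measure \<Rightarrow> real measure \<Rightarrow> real" where
  "exp_payoff p q = (\<integral>x. (\<integral>y. payoff x y \<partial>q) \<partial>p)"

definition lower_value :: "real \<Rightarrow> real" where
  "lower_value \<alpha> = (SUP q\<in>strategies \<alpha>. INF p\<in>strategies \<alpha>. exp_payoff p q)"

definition upper_value :: "real \<Rightarrow> real" where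
  "upper_value \<alpha> = (INF p\<in>strategies \<alpha>. SUP q\<in>strategies \<alpha>. exp_payoff p q)"

definition game_value_is :: "real \<Rightarrow> real \<Rightarrow> bool" where
  "game_value_is \<alpha> v \<longleftrightarrow> lower_value \<alpha> = v \<and> upper_value \<alpha> = v"

definition optimal_x :: "real \<Rightarrow> real \<Rightarrow> real measure \<Rightarrow> bool" where
  "optimal_x \<alpha> v p \<longleftrightarrow> p \<in> strategies \<alpha> \<and> (\<forall>q\<in>strategies \<alpha>. exp_payoff p q \<le> v)"

definition optimal_y :: "real \<Rightarrow> real \<Rightarrow> real measure \<Rightarrow> bool" where
  "optimal_y \<alpha> v q \<longleftrightarrow> q \<in> strategies \<alpha> \<and> (\<forall>p\<in>strategies \<alpha>. exp_payoff p q \<ge> v)"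

definition is_dist_X :: "real \<Rightarrow> real measure \<Rightarrow> bool" where
  "is_dist_X \<alpha> M \<longleftrightarrow> sets M = sets borel \<and>
     (\<forall>A\<in>sets borel. emeasure M A =
        ennreal (beta \<alpha>) * indicator A 0
        + (\<integral>\<^sup>+ x. ennreal (indicator ({0..1-\<alpha>} \<inter> A) x * beta \<alpha> / (1 - x)) \<partial>lborel))"

definition is_dist_Y :: "real \<Rightarrow> real measure \<Rightarrow> bool" where
  "is_dist_Y \<alpha> M \<longleftrightarrow> sets M = sets borel \<and>
     (\<forall>A\<in>sets borel. emeasure M A =
        ennreal (beta \<alpha>) * indicator A (1 - \<alpha>)
        + (\<integral>\<^sup>+ y. ennreal (indicator ({0..1-\<alpha>} \<inter> A) y * beta \<alpha> / (1 - y)) \<partial>lborel))"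

end

theory Submission
  imports Defs
begin

(*
  Both distributions are equalizers. Against the x-distribution every pure y in [0, 1 - alpha]
  earns exactly beta: the atom at 0 contributes beta (1 - y) and the density contributes
  int_0^y beta (1 - y) / (1 - x)^2 dx = beta y. Against the y-distribution every pure x earns
  exactly beta: the atom at 1 - alpha contributes beta alpha / (1 - x) and the density
  beta (1 - alpha - x) / (1 - x). By Fubini each of them therefore guarantees beta against every
  mixed strategy of the opponent, which forces lower and upper value to be beta. The choice
  beta (1 + ln (1 / alpha)) = 1 is exactly what makes both measures probability distributions.
*)

lemma value_of_equalizing_strategies:
  fixes f :: "'a \<Rightarrow> 'b \<Rightarrow> real"
  assumes "p0 \<in> P" and "q0 \<in> Q"
    and p0_equal: "\<And>q. q \<in> Q \<Longrightarrow> f p0 q = v" and q0_equal: "\<And>p. p \<in> P \<Longrightarrow> f p q0 = v"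
    and bounded: "\<And>p q. p \<in> P \<Longrightarrow> q \<in> Q \<Longrightarrow> \<bar>f p q\<bar> \<le> B"
  shows "(SUP q\<in>Q. INF p\<in>P. f p q) = v" and "(INF p\<in>P. SUP q\<in>Q. f p q) = v"
proof -
  have INF_le: "(INF p\<in>P. f p q) \<le> v" if "q \<in> Q" for q
  proof -
    have "bdd_below ((\<lambda>p. f p q) ` P)"
      using bounded[OF _ that] by (intro bdd_belowI2[where m="-B"]) (metis abs_le_D2 minus_le_iff)
    then have "(INF p\<in>P. f p q) \<le> f p0 q" using \<open>p0 \<in> P\<close> by (rule cINF_lower)
    then show ?thesis using p0_equal[OF that] by simp
  qed
  have SUP_ge: "v \<le> (SUP q\<in>Q. f p q)" if "p \<in> P" for p
  proof -
    have "bdd_above ((\<lambda>q. f p q) ` Q)"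
      using bounded[OF that] by (intro bdd_aboveI2[where M=B]) (metis abs_le_D1)
    then have "f p q0 \<le> (SUP q\<in>Q. f p q)" by (rule cSUP_upper[OF \<open>q0 \<in> Q\<close>])
    then show ?thesis using q0_equal[OF that] by simp
  qed
  have "(INF p\<in>P. f p q0) = (INF p\<in>P. v)"
    by (rule INF_cong) (simp_all add: q0_equal)
  also have "\<dots> = v"
    using \<open>p0 \<in> P\<close> by (intro cINF_const) auto
  finally have INF_q0: "(INF p\<in>P. f p q0) = v" .
  have "(SUP q\<in>Q. f p0 q) = (SUP q\<in>Q. v)"
    by (rule SUP_cong) (simp_all add: p0_equal)
  also have "\<dots> = v"
    using \<open>q0 \<in> Q\<close> by (intro cSUP_const) auto
  finally have SUP_p0: "(SUP q\<in>Q. f p0 q) = v" .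
  show "(SUP q\<in>Q. INF p\<in>P. f p q) = v"
  proof (rule antisym)
    show "(SUP q\<in>Q. INF p\<in>P. f p q) \<le> v"
      using \<open>q0 \<in> Q\<close> by (intro cSUP_least INF_le) auto
    show "v \<le> (SUP q\<in>Q. INF p\<in>P. f p q)"
      using INF_q0 \<open>q0 \<in> Q\<close> INF_le
      by (intro cSUP_upper2[where x=q0]) (auto intro!: bdd_aboveI2[where M=v])
  qed
  show "(INF p\<in>P. SUP q\<in>Q. f p q) = v"
  proof (rule antisym)
    show "v \<le> (INF p\<in>P. SUP q\<in>Q. f p q)"
      using \<open>p0 \<in> P\<close> by (intro cINF_greatest SUP_ge) auto
    show "(INF p\<in>P. SUP q\<in>Q. f p q) \<le> v"
      using SUP_p0 \<open>p0 \<in> P\<close> SUP_ge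
      by (intro cINF_lower2[where x=p0]) (auto intro!: bdd_belowI2[where m=v])
  qed
qed

lemma exists_measure_atom_plus:
  fixes N :: "'a measure"
  shows "\<exists>M. sets M = sets N \<and> (\<forall>A\<in>sets N. emeasure M A = c * indicator A a + emeasure N A)"
proof -
  define \<mu> where "\<mu> A = c * indicator A a + emeasure N A" for A
  have "countably_additive (sets N) \<mu>"
  proof (rule countably_additiveI)
    fix A :: "nat \<Rightarrow> 'a set"
    assume A: "range A \<subseteq> sets N" "disjoint_family A"
    have "(\<Sum>i. \<mu> (A i)) = (\<Sum>i. c * indicator (A i) a) + (\<Sum>i. emeasure N (A i))"
      unfolding \<mu>_def by (rule suminf_add[symmetric]) auto
    also have "(\<Sum>i. c * indicator (A i) a) = c * indicator (\<Union>i. A i) a"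
      using suminf_indicator[OF A(2)] by simp
    also have "(\<Sum>i. emeasure N (A i)) = emeasure N (\<Union>i. A i)"
      using A by (intro suminf_emeasure) auto
    finally show "(\<Sum>i. \<mu> (A i)) = \<mu> (\<Union>i. A i)" unfolding \<mu>_def .
  qed
  moreover have "positive (sets N) \<mu>"
    by (auto simp: positive_def \<mu>_def)
  ultimately have "\<forall>A\<in>sets N. emeasure (measure_of (space N) (sets N) \<mu>) A = \<mu> A"
    using emeasure_measure_of_sigma[OF sets.sigma_algebra_axioms] by blast
  moreover have "sets (measure_of (space N) (sets N) \<mu>) = sets N"
    by (simp add: sets.sigma_sets_eq sets.space_closed)
  ultimately show ?thesis unfolding \<mu>_def by blast
qed

lemma nn_integral_atom_plus:
  assumes sets_eq: "sets M = sets N" and "a \<in> space N"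
    and emeasure_eq: "\<forall>A\<in>sets N. emeasure M A = c * indicator A a + emeasure N A"
    and "f \<in> borel_measurable N"
  shows "(\<integral>\<^sup>+x. f x \<partial>M) = c * f a + (\<integral>\<^sup>+x. f x \<partial>N)"
  using \<open>f \<in> borel_measurable N\<close>
proof (induction rule: borel_measurable_induct)
  case (cong f g)
  have "(\<integral>\<^sup>+x. f x \<partial>M) = (\<integral>\<^sup>+x. g x \<partial>M)" "(\<integral>\<^sup>+x. f x \<partial>N) = (\<integral>\<^sup>+x. g x \<partial>N)"
    using cong(3) sets_eq_imp_space_eq[OF sets_eq] by (auto intro: nn_integral_cong)
  then show ?case
    using cong(3,4) \<open>a \<in> space N\<close> by simp
next
  case (set A)
  then show ?case
    using emeasure_eq sets_eq by (simp add: nn_integral_indicator)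
next
  case (mult u d)
  then have "u \<in> borel_measurable M"
    by (simp add: measurable_cong_sets[OF sets_eq refl])
  then show ?case
    using mult by (simp add: nn_integral_cmult algebra_simps)
next
  case (add u v)
  then have "u \<in> borel_measurable M" "v \<in> borel_measurable M"
    by (simp_all add: measurable_cong_sets[OF sets_eq refl])
  then show ?case
    using add by (simp add: nn_integral_add algebra_simps)
next
  case (seq U)
  then have U_M: "U i \<in> borel_measurable M" for i
    by (simp add: measurable_cong_sets[OF sets_eq refl])
  have "(\<integral>\<^sup>+x. (SUP i. U i) x \<partial>M) = (SUP i. c * U i a + (\<integral>\<^sup>+x. U i x \<partial>N))"
    using nn_integral_monotone_convergence_SUP[OF \<open>incseq U\<close> U_M] seq.IH by (simp add: image_comp)
  also have "\<dots> = (SUP i. c * U i a) + (SUP i. (\<integral>\<^sup>+x. U i x \<partial>N))"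
    using \<open>incseq U\<close>
    by (intro ennreal_SUP_add) (auto simp: incseq_def le_fun_def intro!: mult_left_mono nn_integral_mono)
  also have "\<dots> = c * (SUP i. U i) a + (\<integral>\<^sup>+x. (SUP i. U i) x \<partial>N)"
    using nn_integral_monotone_convergence_SUP[OF \<open>incseq U\<close> seq(1)]
    by (simp add: SUP_mult_left_ennreal image_comp)
  finally show ?case .
qed

lemma borel_measurable_payoff[measurable]:
  assumes [measurable]: "f \<in> borel_measurable M" "g \<in> borel_measurable M"
  shows "(\<lambda>z. payoff (f z) (g z)) \<in> borel_measurable M"
proof -
  have "payoff x y = (1 - y) * (if x \<le> y then 1 else 0) / (1 - x)" for x y
    by (simp add: payoff_def)
  then show ?thesis by simp
qed

lemma payoff_bounds:
  assumes "y \<le> 1"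
  shows "0 \<le> payoff x y" "payoff x y \<le> 1"
  using assms by (auto simp: payoff_def indicator_def divide_simps)

lemma strategiesD:
  assumes "p \<in> strategies \<alpha>"
  shows "prob_space p" "sets p = sets borel" "AE x in p. x \<in> {0..1-\<alpha>}"
proof -
  show p: "prob_space p" "sets p = sets borel" using assms by (auto simp: strategies_def)
  have "measure p {0..1-\<alpha>} = 1" using assms by (simp add: strategies_def measure_def)
  then show "AE x in p. x \<in> {0..1-\<alpha>}" using prob_space.AE_prob_1[OF p(1)] by blast
qed

lemma pair_prob_space_strategies:
  "p \<in> strategies \<alpha> \<Longrightarrow> q \<in> strategies \<alpha> \<Longrightarrow> pair_prob_space p q"
  using strategiesD(1)
  by (simp add: pair_prob_space_def pair_sigma_finite_def prob_space_imp_sigma_finite)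

lemma
  assumes "0 \<le> \<alpha>" and p: "p \<in> strategies \<alpha>" and q: "q \<in> strategies \<alpha>"
  shows integrable_payoff_pair: "integrable (p \<Otimes>\<^sub>M q) (\<lambda>(x, y). payoff x y)"
    and payoff_bounds_AE_pair:
      "AE z in p \<Otimes>\<^sub>M q. 0 \<le> payoff (fst z) (snd z) \<and> payoff (fst z) (snd z) \<le> 1"
proof -
  note sp = strategiesD[OF p] and sq = strategiesD[OF q]
  interpret pair_prob_space p q
    using p q by (rule pair_prob_space_strategies)
  note [measurable_cong] = sp(2) sq(2)
  have "AE y in q. 0 \<le> payoff x y \<and> payoff x y \<le> 1" for x
    using sq(3) by eventually_elim (use \<open>0 \<le> \<alpha>\<close> payoff_bounds in auto)
  then have "AE x in p. AE y in q. 0 \<le> payoff x y \<and> payoff x y \<le> 1"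
    by simp
  then show ae: "AE z in p \<Otimes>\<^sub>M q. 0 \<le> payoff (fst z) (snd z) \<and> payoff (fst z) (snd z) \<le> 1"
    by (intro AE_pair_measure) auto
  show "integrable (p \<Otimes>\<^sub>M q) (\<lambda>(x, y). payoff x y)"
    by (rule integrable_const_bound[where B=1]) (use ae in \<open>auto simp: split_beta\<close>)
qed

lemma
  assumes "0 \<le> \<alpha>" and p: "p \<in> strategies \<alpha>" and q: "q \<in> strategies \<alpha>"
  shows exp_payoff_eq_integral_pair: "exp_payoff p q = (\<integral>z. payoff (fst z) (snd z) \<partial>(p \<Otimes>\<^sub>M q))"
    and exp_payoff_swap: "exp_payoff p q = (\<integral>y. (\<integral>x. payoff x y \<partial>p) \<partial>q)"
proof -
  interpret pair_prob_space p q
    using p q by (rule pair_prob_space_strategies)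
  note int = integrable_payoff_pair[OF assms]
  show "exp_payoff p q = (\<integral>z. payoff (fst z) (snd z) \<partial>(p \<Otimes>\<^sub>M q))"
    unfolding exp_payoff_def using integral_fst'[OF int] by (simp add: split_beta')
  show "exp_payoff p q = (\<integral>y. (\<integral>x. payoff x y \<partial>p) \<partial>q)"
    unfolding exp_payoff_def using Fubini_integral[OF int] by simp
qed

lemma exp_payoff_bounds:
  assumes "0 \<le> \<alpha>" and p: "p \<in> strategies \<alpha>" and q: "q \<in> strategies \<alpha>"
  shows "0 \<le> exp_payoff p q" "exp_payoff p q \<le> 1"
proof -
  interpret prob_space "p \<Otimes>\<^sub>M q"
    using strategiesD(1) p q by (intro prob_space_pair)
  note int = integrable_payoff_pair[OF assms, unfolded split_beta']
  note ae = payoff_bounds_AE_pair[OF assms]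
  show "0 \<le> exp_payoff p q"
    unfolding exp_payoff_eq_integral_pair[OF assms] by (rule integral_ge_const[OF int]) (use ae in auto)
  show "exp_payoff p q \<le> 1"
    unfolding exp_payoff_eq_integral_pair[OF assms] by (rule integral_le_const[OF int]) (use ae in auto)
qed

lemma exp_payoff_eq_of_x_equalizer:
  assumes "0 \<le> \<alpha>" and p: "p \<in> strategies \<alpha>" and q: "q \<in> strategies \<alpha>"
    and equal: "\<And>y. y \<in> {0..1-\<alpha>} \<Longrightarrow> (\<integral>x. payoff x y \<partial>p) = v"
  shows "exp_payoff p q = v"
proof -
  note sp = strategiesD[OF p] and sq = strategiesD[OF q]
  interpret p: prob_space p using sp(1) .
  note [measurable_cong] = sp(2) sq(2)
  have "AE y in q. (\<integral>x. payoff x y \<partial>p) = v"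
    using sq(3) by eventually_elim (rule equal)
  then have "exp_payoff p q = (\<integral>y. v \<partial>q)"
    unfolding exp_payoff_swap[OF assms(1-3)] by (intro integral_cong_AE) auto
  also have "\<dots> = v"
    using prob_space.prob_space[OF sq(1)] by simp
  finally show ?thesis .
qed

lemma exp_payoff_eq_of_y_equalizer:
  assumes p: "p \<in> strategies \<alpha>" and q: "q \<in> strategies \<alpha>"
    and equal: "\<And>x. x \<in> {0..1-\<alpha>} \<Longrightarrow> (\<integral>y. payoff x y \<partial>q) = v"
  shows "exp_payoff p q = v"
proof -
  note sp = strategiesD[OF p] and sq = strategiesD[OF q]
  interpret q: prob_space q using sq(1) .
  note [measurable_cong] = sp(2) sq(2)
  have "AE x in p. (\<integral>y. payoff x y \<partial>q) = v"
    using sp(3) by eventually_elim (rule equal)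
  then have "exp_payoff p q = (\<integral>x. v \<partial>p)"
    unfolding exp_payoff_def by (intro integral_cong_AE) auto
  also have "\<dots> = v"
    using prob_space.prob_space[OF sp(1)] by simp
  finally show ?thesis .
qed

lemma
  assumes "0 < \<alpha>" "\<alpha> < 1"
  shows beta_pos: "0 < beta \<alpha>" and beta_mult_eq_1: "beta \<alpha> * (1 + ln (1 / \<alpha>)) = 1"
proof -
  have "0 < ln (1 / \<alpha>)" using assms by simp
  then show "0 < beta \<alpha>" "beta \<alpha> * (1 + ln (1 / \<alpha>)) = 1" by (simp_all add: beta_def)
qed

definition dist_density :: "real \<Rightarrow> real \<Rightarrow> real" where
  "dist_density \<alpha> x = indicator {0..1-\<alpha>} x * beta \<alpha> / (1 - x)"

lemma borel_measurable_dist_density[measurable]: "dist_density \<alpha> \<in> borel_measurable borel"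
  unfolding dist_density_def by measurable

lemma dist_density_nonneg:
  assumes "0 < \<alpha>" "\<alpha> < 1"
  shows "0 \<le> dist_density \<alpha> x"
  using beta_pos[OF assms] assms by (auto simp: dist_density_def indicator_def)

definition atom_plus_density :: "real \<Rightarrow> real \<Rightarrow> real measure \<Rightarrow> bool" where
  "atom_plus_density \<alpha> a M \<longleftrightarrow> sets M = sets borel \<and>
     (\<forall>A\<in>sets borel. emeasure M A =
        ennreal (beta \<alpha>) * indicator A a + emeasure (density lborel (\<lambda>x. ennreal (dist_density \<alpha> x))) A)"

lemma emeasure_density_dist_density:
  assumes "A \<in> sets borel"
  shows "emeasure (density lborel (\<lambda>x. ennreal (dist_density \<alpha> x))) A
    = (\<integral>\<^sup>+ x. ennreal (indicator ({0..1-\<alpha>} \<inter> A) x * beta \<alpha> / (1 - x)) \<partial>lborel)"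
  using assms by (auto simp: emeasure_density dist_density_def indicator_def intro!: nn_integral_cong)

lemma is_dist_X_iff: "is_dist_X \<alpha> M \<longleftrightarrow> atom_plus_density \<alpha> 0 M"
  by (simp add: is_dist_X_def atom_plus_density_def emeasure_density_dist_density)

lemma is_dist_Y_iff: "is_dist_Y \<alpha> M \<longleftrightarrow> atom_plus_density \<alpha> (1 - \<alpha>) M"
  by (simp add: is_dist_Y_def atom_plus_density_def emeasure_density_dist_density)

lemma exists_atom_plus_density: "\<exists>M. atom_plus_density \<alpha> a M"
  using exists_measure_atom_plus[of "density lborel (\<lambda>x. ennreal (dist_density \<alpha> x))"]
  by (simp add: atom_plus_density_def)

lemma nn_integral_atom_plus_density:
  assumes "atom_plus_density \<alpha> a M" and "f \<in> borel_measurable borel"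
  shows "(\<integral>\<^sup>+x. f x \<partial>M)
    = ennreal (beta \<alpha>) * f a + (\<integral>\<^sup>+x. ennreal (dist_density \<alpha> x) * f x \<partial>lborel)"
proof -
  have "(\<integral>\<^sup>+x. f x \<partial>M)
      = ennreal (beta \<alpha>) * f a + (\<integral>\<^sup>+x. f x \<partial>density lborel (\<lambda>x. ennreal (dist_density \<alpha> x)))"
    using assms by (intro nn_integral_atom_plus) (auto simp: atom_plus_density_def)
  then show ?thesis
    using assms(2) by (simp add: nn_integral_density)
qed

lemma nn_integral_dist_density:
  assumes "0 < \<alpha>" "\<alpha> < 1"
  shows "(\<integral>\<^sup>+x. ennreal (dist_density \<alpha> x) \<partial>lborel) = ennreal (beta \<alpha> * ln (1 / \<alpha>))"
proof -
  have "(\<integral>\<^sup>+x. ennreal (dist_density \<alpha> x) \<partial>lborel)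
      = (\<integral>\<^sup>+x. ennreal (beta \<alpha> / (1 - x)) * indicator {0..1-\<alpha>} x \<partial>lborel)"
    by (intro nn_integral_cong) (simp add: dist_density_def indicator_def)
  also have "\<dots> = (- beta \<alpha> * ln (1 - (1 - \<alpha>))) - (- beta \<alpha> * ln (1 - 0))"
  proof (rule nn_integral_FTC_Icc)
    fix x assume "x \<in> {0..1-\<alpha>}"
    then have "0 < 1 - x" using assms by auto
    then show "((\<lambda>x. - beta \<alpha> * ln (1 - x)) has_real_derivative beta \<alpha> / (1 - x)) (at x)"
      by (auto intro!: derivative_eq_intros simp: field_simps)
    show "0 \<le> beta \<alpha> / (1 - x)" using beta_pos[OF assms] \<open>0 < 1 - x\<close> by simp
  qed (use assms in auto)
  also have "\<dots> = beta \<alpha> * ln (1 / \<alpha>)"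
    using assms by (simp add: ln_div)
  finally show ?thesis .
qed

lemma atom_plus_density_in_strategies:
  assumes "0 < \<alpha>" "\<alpha> < 1" and M: "atom_plus_density \<alpha> a M" and "a \<in> {0..1-\<alpha>}"
  shows "M \<in> strategies \<alpha>"
proof -
  have sets_M: "sets M = sets borel"
    using M by (simp add: atom_plus_density_def)
  have emeasure_1: "emeasure M A = 1" if "{0..1-\<alpha>} \<subseteq> A" "A \<in> sets borel" for A
  proof -
    have "emeasure M A = (\<integral>\<^sup>+x. indicator A x \<partial>M)"
      using that sets_M by simp
    also have "\<dots>
        = ennreal (beta \<alpha>) + (\<integral>\<^sup>+x. ennreal (dist_density \<alpha> x) * indicator A x \<partial>lborel)"
      using nn_integral_atom_plus_density[OF M, of "indicator A"] that \<open>a \<in> {0..1-\<alpha>}\<close> by auto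
    also have "(\<integral>\<^sup>+x. ennreal (dist_density \<alpha> x) * indicator A x \<partial>lborel)
        = (\<integral>\<^sup>+x. ennreal (dist_density \<alpha> x) \<partial>lborel)"
      using that by (intro nn_integral_cong) (auto simp: dist_density_def indicator_def)
    also have "\<dots> = ennreal (beta \<alpha> * ln (1 / \<alpha>))"
      using assms(1,2) by (rule nn_integral_dist_density)
    also have "ennreal (beta \<alpha>) + ennreal (beta \<alpha> * ln (1 / \<alpha>))
        = ennreal (beta \<alpha> * (1 + ln (1 / \<alpha>)))"
      using assms beta_pos[OF assms(1,2)]
      by (simp add: ennreal_plus[symmetric] distrib_left del: ennreal_plus)
    finally show ?thesis
      using beta_mult_eq_1[OF assms(1,2)] by simp
  qed
  have "prob_space M"
    using emeasure_1[of "space M"] sets_eq_imp_space_eq[OF sets_M] by (intro prob_spaceI) simp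
  then show ?thesis
    using emeasure_1[of "{0..1-\<alpha>}"] sets_M by (simp add: strategies_def)
qed

lemma nn_integral_payoff_atom_at_0:
  assumes "0 < \<alpha>" "\<alpha> < 1" and M: "atom_plus_density \<alpha> 0 M" and y: "y \<in> {0..1-\<alpha>}"
  shows "(\<integral>\<^sup>+x. ennreal (payoff x y) \<partial>M) = ennreal (beta \<alpha>)"
proof -
  define b where "b = beta \<alpha>"
  have "0 < b" using beta_pos[OF assms(1,2)] by (simp add: b_def)
  have "(\<integral>\<^sup>+x. ennreal (payoff x y) \<partial>M)
      = ennreal b * ennreal (payoff 0 y)
        + (\<integral>\<^sup>+x. ennreal (dist_density \<alpha> x) * ennreal (payoff x y) \<partial>lborel)"
    unfolding b_def by (rule nn_integral_atom_plus_density[OF M]) measurable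
  also have "payoff 0 y = 1 - y"
    using y by (simp add: payoff_def)
  also have "(\<integral>\<^sup>+x. ennreal (dist_density \<alpha> x) * ennreal (payoff x y) \<partial>lborel)
      = (\<integral>\<^sup>+x. ennreal (b * (1 - y) / (1 - x)\<^sup>2) * indicator {0..y} x \<partial>lborel)"
  proof (intro nn_integral_cong)
    fix x :: real
    have "ennreal (dist_density \<alpha> x) * ennreal (payoff x y) = ennreal (dist_density \<alpha> x * payoff x y)"
      using dist_density_nonneg[OF assms(1,2)] by (simp add: ennreal_mult')
    also have "dist_density \<alpha> x * payoff x y = indicator {0..y} x * (b * (1 - y) / (1 - x)\<^sup>2)"
      using y by (auto simp: dist_density_def payoff_def indicator_def b_def power2_eq_square)
    finally show "ennreal (dist_density \<alpha> x) * ennreal (payoff x y)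
        = ennreal (b * (1 - y) / (1 - x)\<^sup>2) * indicator {0..y} x"
      by (metis indicator_mult_ennreal mult.commute)
  qed
  also have "\<dots> = ennreal (b * (1 - y) / (1 - y) - b * (1 - y) / (1 - 0))"
  proof (rule nn_integral_FTC_Icc)
    fix x assume "x \<in> {0..y}"
    then have "0 < 1 - x" using y assms by auto
    then show "((\<lambda>x. b * (1 - y) / (1 - x)) has_real_derivative b * (1 - y) / (1 - x)\<^sup>2) (at x)"
      by (auto intro!: derivative_eq_intros simp: field_simps power2_eq_square)
    show "0 \<le> b * (1 - y) / (1 - x)\<^sup>2" using \<open>0 < b\<close> y assms by simp
  qed (use y in auto)
  also have "b * (1 - y) / (1 - y) - b * (1 - y) / (1 - 0) = b * y"
    using y assms by (simp add: field_simps)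
  also have "ennreal b * ennreal (1 - y) + ennreal (b * y) = ennreal b"
    using \<open>0 < b\<close> y assms
    by (simp add: ennreal_mult[symmetric] ennreal_plus[symmetric] algebra_simps del: ennreal_plus)
  finally show ?thesis by (simp add: b_def)
qed

lemma nn_integral_payoff_atom_at_top:
  assumes "0 < \<alpha>" "\<alpha> < 1" and M: "atom_plus_density \<alpha> (1 - \<alpha>) M" and x: "x \<in> {0..1-\<alpha>}"
  shows "(\<integral>\<^sup>+y. ennreal (payoff x y) \<partial>M) = ennreal (beta \<alpha>)"
proof -
  define b where "b = beta \<alpha>"
  have "0 < b" using beta_pos[OF assms(1,2)] by (simp add: b_def)
  have "0 < 1 - x" using x assms by auto
  have "(\<integral>\<^sup>+y. ennreal (payoff x y) \<partial>M)
      = ennreal b * ennreal (payoff x (1 - \<alpha>))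
        + (\<integral>\<^sup>+y. ennreal (dist_density \<alpha> y) * ennreal (payoff x y) \<partial>lborel)"
    unfolding b_def by (rule nn_integral_atom_plus_density[OF M]) measurable
  also have "payoff x (1 - \<alpha>) = \<alpha> / (1 - x)"
    using x by (simp add: payoff_def)
  also have "(\<integral>\<^sup>+y. ennreal (dist_density \<alpha> y) * ennreal (payoff x y) \<partial>lborel)
      = (\<integral>\<^sup>+y. ennreal (b / (1 - x)) * indicator {x..1-\<alpha>} y \<partial>lborel)"
  proof (intro nn_integral_cong)
    fix y :: real
    have "ennreal (dist_density \<alpha> y) * ennreal (payoff x y) = ennreal (dist_density \<alpha> y * payoff x y)"
      using dist_density_nonneg[OF assms(1,2)] by (simp add: ennreal_mult')
    also have "dist_density \<alpha> y * payoff x y = indicator {x..1-\<alpha>} y * (b / (1 - x))"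
      using x assms by (auto simp: dist_density_def payoff_def indicator_def b_def)
    finally show "ennreal (dist_density \<alpha> y) * ennreal (payoff x y) = ennreal (b / (1 - x)) * indicator {x..1-\<alpha>} y"
      by (metis indicator_mult_ennreal mult.commute)
  qed
  also have "\<dots> = ennreal (b / (1 - x)) * ennreal (1 - \<alpha> - x)"
    using x by (simp add: nn_integral_cmult_indicator)
  also have "ennreal b * ennreal (\<alpha> / (1 - x)) + ennreal (b / (1 - x)) * ennreal (1 - \<alpha> - x) = ennreal b"
  proof -
    have "b * (\<alpha> / (1 - x)) + b / (1 - x) * (1 - \<alpha> - x) = b"
      using \<open>0 < 1 - x\<close> by (simp add: divide_simps) (simp add: algebra_simps)
    then show ?thesis
      using \<open>0 < b\<close> \<open>0 < 1 - x\<close> x assms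
      by (simp add: ennreal_mult[symmetric] ennreal_plus[symmetric] del: ennreal_plus)
  qed
  finally show ?thesis by (simp add: b_def)
qed

lemma integral_payoff_dist_X:
  assumes "0 < \<alpha>" "\<alpha> < 1" and "is_dist_X \<alpha> M" and y: "y \<in> {0..1-\<alpha>}"
  shows "(\<integral>x. payoff x y \<partial>M) = beta \<alpha>"
proof -
  have M: "atom_plus_density \<alpha> 0 M"
    using assms(3) by (simp add: is_dist_X_iff)
  then have [measurable_cong]: "sets M = sets borel"
    by (simp add: atom_plus_density_def)
  have "(\<integral>x. payoff x y \<partial>M) = enn2real (\<integral>\<^sup>+x. ennreal (payoff x y) \<partial>M)"
    using y assms by (intro integral_eq_nn_integral) (auto simp: payoff_bounds)
  then show ?thesis
    using nn_integral_payoff_atom_at_0[OF assms(1,2) M y] beta_pos[OF assms(1,2)] by simp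
qed

lemma integral_payoff_dist_Y:
  assumes "0 < \<alpha>" "\<alpha> < 1" and "is_dist_Y \<alpha> M" and x: "x \<in> {0..1-\<alpha>}"
  shows "(\<integral>y. payoff x y \<partial>M) = beta \<alpha>"
proof -
  have M: "atom_plus_density \<alpha> (1 - \<alpha>) M"
    using assms(3) by (simp add: is_dist_Y_iff)
  then have [measurable_cong]: "sets M = sets borel"
    by (simp add: atom_plus_density_def)
  have "AE y in M. y \<in> {0..1-\<alpha>}"
    using atom_plus_density_in_strategies[OF assms(1,2) M] assms(1,2) by (auto dest: strategiesD(3))
  then have "AE y in M. 0 \<le> payoff x y"
    by eventually_elim (use assms(1) in \<open>simp add: payoff_bounds\<close>)
  then have "(\<integral>y. payoff x y \<partial>M) = enn2real (\<integral>\<^sup>+y. ennreal (payoff x y) \<partial>M)"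
    by (intro integral_eq_nn_integral) auto
  then show ?thesis
    using nn_integral_payoff_atom_at_top[OF assms(1,2) M x] beta_pos[OF assms(1,2)] by simp
qed

lemma dist_X_equalizes:
  assumes "0 < \<alpha>" "\<alpha> < 1" and "is_dist_X \<alpha> p"
  shows "p \<in> strategies \<alpha>" and "q \<in> strategies \<alpha> \<Longrightarrow> exp_payoff p q = beta \<alpha>"
proof -
  show p: "p \<in> strategies \<alpha>"
    using assms by (intro atom_plus_density_in_strategies) (auto simp: is_dist_X_iff)
  show "exp_payoff p q = beta \<alpha>" if "q \<in> strategies \<alpha>"
    using assms p that integral_payoff_dist_X[OF assms] by (intro exp_payoff_eq_of_x_equalizer) auto
qed

lemma dist_Y_equalizes:
  assumes "0 < \<alpha>" "\<alpha> < 1" and "is_dist_Y \<alpha> q"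
  shows "q \<in> strategies \<alpha>" and "p \<in> strategies \<alpha> \<Longrightarrow> exp_payoff p q = beta \<alpha>"
proof -
  show q: "q \<in> strategies \<alpha>"
    using assms by (intro atom_plus_density_in_strategies) (auto simp: is_dist_Y_iff)
  show "exp_payoff p q = beta \<alpha>" if "p \<in> strategies \<alpha>"
    using q that integral_payoff_dist_Y[OF assms] by (intro exp_payoff_eq_of_y_equalizer) auto
qed

theorem lemma2:
  fixes \<alpha> :: real
  assumes "0 < \<alpha>" and "\<alpha> < 1"
  shows "game_value_is \<alpha> (beta \<alpha>)
    \<and> (\<exists>M. is_dist_X \<alpha> M) \<and> (\<forall>M. is_dist_X \<alpha> M \<longrightarrow> optimal_x \<alpha> (beta \<alpha>) M)
    \<and> (\<exists>M. is_dist_Y \<alpha> M) \<and> (\<forall>M. is_dist_Y \<alpha> M \<longrightarrow> optimal_y \<alpha> (beta \<alpha>) M)"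
proof -
  obtain p0 q0 where p0: "is_dist_X \<alpha> p0" and q0: "is_dist_Y \<alpha> q0"
    using exists_atom_plus_density by (meson is_dist_X_iff is_dist_Y_iff)
  have bounded: "\<bar>exp_payoff p q\<bar> \<le> 1" if "p \<in> strategies \<alpha>" "q \<in> strategies \<alpha>" for p q
    using exp_payoff_bounds[OF _ that] assms(1) by simp
  have "lower_value \<alpha> = beta \<alpha> \<and> upper_value \<alpha> = beta \<alpha>"
    using value_of_equalizing_strategies[where f = exp_payoff,
        OF dist_X_equalizes(1)[OF assms p0] dist_Y_equalizes(1)[OF assms q0]
          dist_X_equalizes(2)[OF assms p0] dist_Y_equalizes(2)[OF assms q0] bounded]
    by (simp add: lower_value_def upper_value_def)
  then show ?thesis
    using p0 q0 dist_X_equalizes[OF assms] dist_Y_equalizes[OF assms] assms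
    by (auto simp: game_value_is_def optimal_x_def optimal_y_def)
qed

end
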